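(* (1) For every $\varepsilon\ge 0$, the optimal partition selection primitive for $(\varepsilon,0)$-differential privacy is $\pi_{\mathrm{opt}}(n)=0$ for all $n\in\mathbb{N}$. (2) For every $\delta\in[0,1]$, the optimal partition selection primitive for $(0,\delta)$-differential privacy is $\pi_{\mathrm{opt}}(n)=\min(1,n\delta)$ for all $n\in\mathbb{N}$.
   Context: $\mathbb{N}=\{0,1,2,\dots\}$. A partition selection primitive is a function $\pi:\mathbb{N}\to[0,1]$ with $\pi(0)=0$; it is interpreted as: count the number $n$ of users in a partition and release (keep) the partition with probability $\pi(n)$, drop it otherwise. Let $\rho_\pi(n)$ be the random variable in $\{\mathrm{drop},\mathrm{keep}\}$ equal to keep with probability $\pi(n)$ and drop with probability $1-\pi(n)$. The primitive $\pi$ is $(\varepsilon,\delta)$-differentially private if for all $n,n'\in\mathbb{N}$ with $|n-n'|=1$ and all $S\subseteq\{\mathrm{drop},\mathrm{keep}\}$, $\Pr[\rho_\pi(n)\in S]\le e^{\varepsilon}\Pr[\rho_\pi(n')\in S]+\delta$. A primitive $\pi_{\mathrm{opt}}$ is optimal for $(\varepsilon,\delta)$-DP if it is $(\varepsilon,\delta)$-differentially private and for every $(\varepsilon,\delta)$-differentially private partition selection primitive $\pi$ and every $n\in\mathbb{N}$, $\pi(n)\le\pi_{\mathrm{opt}}(n)$. *)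

theory Defs
  imports Complex_Main
begin

datatype outcome = Drop | Keep

definition is_primitive :: "(nat \<Rightarrow> real) \<Rightarrow> bool" where
  "is_primitive p \<longleftrightarrow> p 0 = 0 \<and> (\<forall>n. 0 \<le> p n \<and> p n \<le> 1)"

text \<open>Probability that rho_p(n) lies in S.\<close>
definition rho_prob :: "(nat \<Rightarrow> real) \<Rightarrow> nat \<Rightarrow> outcome set \<Rightarrow> real" where
  "rho_prob p n S = (if Keep \<in> S then p n else 0) + (if Drop \<in> S then 1 - p n else 0)"

definition is_dp :: "real \<Rightarrow> real \<Rightarrow> (nat \<Rightarrow> real) \<Rightarrow> bool" where
  "is_dp \<epsilon> \<delta> p \<longleftrightarrow> is_primitive p \<and>
     (\<forall>n n' S. \<bar>int n - int n'\<bar> = 1 \<longrightarrow>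
        rho_prob p n S \<le> exp \<epsilon> * rho_prob p n' S + \<delta>)"

definition is_optimal :: "real \<Rightarrow> real \<Rightarrow> (nat \<Rightarrow> real) \<Rightarrow> bool" where
  "is_optimal \<epsilon> \<delta> p_opt \<longleftrightarrow> is_dp \<epsilon> \<delta> p_opt \<and>
     (\<forall>p. is_dp \<epsilon> \<delta> p \<longrightarrow> (\<forall>n. p n \<le> p_opt n))"

end

theory Submission
  imports Defs
begin

(* Both parts rest on the event {Keep} alone: a private primitive obeys
   pi(n+1) <= e^eps pi(n) + delta, so starting from pi(0) = 0 it stays at 0 when delta = 0 and
   grows by at most delta per step when eps = 0. Conversely, the candidate optima satisfy the
   constraints of all four events, since for eps = 0 these only ask that neighbouring values
   differ by at most delta. *)

lemma is_dp_iff: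
  "is_dp e d p \<longleftrightarrow> is_primitive p \<and> 0 \<le> d \<and> 1 \<le> exp e + d \<and>
     (\<forall>n n'. \<bar>int n - int n'\<bar> = 1 \<longrightarrow>
        p n \<le> exp e * p n' + d \<and> 1 - p n \<le> exp e * (1 - p n') + d)"
proof
  assume dp: "is_dp e d p"
  have event: "rho_prob p n S \<le> exp e * rho_prob p n' S + d"
    if "\<bar>int n - int n'\<bar> = 1" for n n' S
    using dp that unfolding is_dp_def by blast
  have "\<bar>int 0 - int 1\<bar> = 1" by simp
  from event[OF this, of "{}"] event[OF this, of UNIV]
  have "0 \<le> d" "1 \<le> exp e + d" by (simp_all add: rho_prob_def)
  moreover have "p n \<le> exp e * p n' + d \<and> 1 - p n \<le> exp e * (1 - p n') + d"
    if "\<bar>int n - int n'\<bar> = 1" for n n'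
    using event[OF that, of "{Keep}"] event[OF that, of "{Drop}"] by (simp add: rho_prob_def)
  ultimately show "is_primitive p \<and> 0 \<le> d \<and> 1 \<le> exp e + d \<and>
     (\<forall>n n'. \<bar>int n - int n'\<bar> = 1 \<longrightarrow>
        p n \<le> exp e * p n' + d \<and> 1 - p n \<le> exp e * (1 - p n') + d)"
    using dp unfolding is_dp_def by blast
next
  assume "is_primitive p \<and> 0 \<le> d \<and> 1 \<le> exp e + d \<and>
     (\<forall>n n'. \<bar>int n - int n'\<bar> = 1 \<longrightarrow>
        p n \<le> exp e * p n' + d \<and> 1 - p n \<le> exp e * (1 - p n') + d)"
  then show "is_dp e d p"
    unfolding is_dp_def rho_prob_def by auto
qed

lemma is_dp_Suc_le:
  assumes "is_dp e d p"
  shows "p (Suc n) \<le> exp e * p n + d"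
  using assms by (simp add: is_dp_iff)

lemma is_dp_0_iff:
  "is_dp 0 d p \<longleftrightarrow> is_primitive p \<and> 0 \<le> d \<and>
     (\<forall>n n'. \<bar>int n - int n'\<bar> = 1 \<longrightarrow> \<bar>p n - p n'\<bar> \<le> d)"
  unfolding is_dp_iff by (simp add: abs_le_iff) (smt (verit))

lemma is_dp_delta_0_eq_0:
  assumes "is_dp e 0 p"
  shows "p n = 0"
proof (induction n)
  case 0
  then show ?case using assms by (simp add: is_dp_def is_primitive_def)
next
  case (Suc n)
  have "0 \<le> p (Suc n)" using assms by (simp add: is_dp_def is_primitive_def)
  with Suc is_dp_Suc_le[OF assms, of n] show ?case by simp
qed

lemma is_dp_eps_0_le:
  assumes "is_dp 0 d p"
  shows "p n \<le> real n * d"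
proof (induction n)
  case 0
  then show ?case using assms by (simp add: is_dp_def is_primitive_def)
next
  case (Suc n)
  with is_dp_Suc_le[OF assms, of n] show ?case by (simp add: algebra_simps)
qed

lemma is_optimal_delta_0:
  assumes "0 \<le> e"
  shows "is_optimal e 0 (\<lambda>n. 0)"
proof -
  have "1 \<le> exp e" using assms by simp
  then have "is_dp e 0 (\<lambda>n. 0)"
    by (simp add: is_dp_iff is_primitive_def)
  then show ?thesis
    unfolding is_optimal_def using is_dp_delta_0_eq_0 by fastforce
qed

lemma is_optimal_eps_0:
  assumes "0 \<le> d" "d \<le> 1"
  shows "is_optimal 0 d (\<lambda>n. min 1 (real n * d))"
proof -
  let ?f = "\<lambda>n. min 1 (real n * d)"
  have "\<bar>?f n - ?f n'\<bar> \<le> d" if "\<bar>int n - int n'\<bar> = 1" for n n'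
  proof -
    have "n = Suc n' \<or> n' = Suc n" using that by linarith
    then show ?thesis using assms by (auto simp: algebra_simps min_def)
  qed
  with assms have "is_dp 0 d ?f"
    by (simp add: is_dp_0_iff is_primitive_def)
  moreover have "p n \<le> ?f n" if "is_dp 0 d p" for p n
    using is_dp_eps_0_le[OF that, of n] that by (simp add: is_dp_def is_primitive_def)
  ultimately show ?thesis
    unfolding is_optimal_def by blast
qed

theorem theorem2:
  shows "(\<forall>\<epsilon>::real. \<epsilon> \<ge> 0 \<longrightarrow> is_optimal \<epsilon> 0 (\<lambda>n. 0))
       \<and> (\<forall>\<delta>::real. 0 \<le> \<delta> \<and> \<delta> \<le> 1 \<longrightarrow> is_optimal 0 \<delta> (\<lambda>n. min 1 (real n * \<delta>)))"
  using is_optimal_delta_0 is_optimal_eps_0 by blast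

end
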